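(* Let $\alpha$ be a partial order on a set $A$ which is a half-space, and let $\lambda$ be a linear order on $A$. Put $\alpha[\lambda]=\alpha\cup(\lambda\setminus(\alpha\cup\alpha^{-1}))$. Then $\alpha[\lambda]$ is a linear order on $A$ containing $\alpha$, and $\alpha=\alpha[\lambda]\cap\alpha[\lambda^{-1}]$.
   Context: A quasiorder on $A$ is a reflexive and transitive relation; $\Delta_A=\{(a,a)\mid a\in A\}$. A quasiorder $\alpha$ on $A$ is a half-space if there is a quasiorder $\beta$ on $A$ with $\alpha\cup\beta=A\times A$ and $\alpha\cap\beta=\Delta_A$. Linear orders are taken reflexive (antisymmetric, transitive, total). *)

theory Defs
  imports Main
begin

definition quasiorder_on :: "'a set \<Rightarrow> 'a rel \<Rightarrow> bool" where
  "quasiorder_on A r \<longleftrightarrow> r \<subseteq> A \<times> A \<and> refl_on A r \<and> trans r"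

definition partial_order_on' :: "'a set \<Rightarrow> 'a rel \<Rightarrow> bool" where
  "partial_order_on' A r \<longleftrightarrow> quasiorder_on A r \<and> antisym r"

definition linear_order_on' :: "'a set \<Rightarrow> 'a rel \<Rightarrow> bool" where
  "linear_order_on' A r \<longleftrightarrow> partial_order_on' A r \<and> total_on A r"

definition half_space :: "'a set \<Rightarrow> 'a rel \<Rightarrow> bool" where
  "half_space A \<alpha> \<longleftrightarrow> quasiorder_on A \<alpha> \<and>
     (\<exists>\<beta>. quasiorder_on A \<beta> \<and> \<alpha> \<union> \<beta> = A \<times> A \<and> \<alpha> \<inter> \<beta> = Id_on A)"

definition extend_by :: "'a rel \<Rightarrow> 'a rel \<Rightarrow> 'a rel" where
  "extend_by \<alpha> L = \<alpha> \<union> (L - (\<alpha> \<union> \<alpha>\<inverse>))"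

end

theory Submission
  imports Defs
begin

text \<open>Let \<open>\<beta>\<close> witness that \<open>\<alpha>\<close> is a half-space. Then \<open>\<beta>\<close> contains every pair of \<open>A\<close> outside
  \<open>\<alpha>\<close>, so by transitivity of \<open>\<beta>\<close> the endpoints of a path of two \<open>\<alpha>\<close>-non-edges are
  \<open>\<alpha>\<close>-related only if they coincide. This is what makes \<open>\<alpha>[\<lambda>]\<close> transitive: composing an
  \<open>\<alpha>\<close>-edge with a \<open>\<lambda>\<close>-edge between \<open>\<alpha>\<close>-incomparable points either yields an \<open>\<alpha>\<close>-edge or
  degenerates. Reflexivity, antisymmetry and totality are inherited from \<open>\<alpha>\<close> and \<open>\<lambda>\<close>; and a pair
  in \<open>\<alpha>[\<lambda>] \<inter> \<alpha>[\<lambda>\<inverse>]\<close> outside \<open>\<alpha>\<close> would be a \<open>\<lambda>\<close>-edge in both directions, hence a loop,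
  which \<open>\<alpha>\<close> already contains.\<close>

lemma half_space_eq_if_non_edges:
  assumes "half_space A \<alpha>" and "(x, z) \<in> \<alpha>" and "y \<in> A"
    and "(x, y) \<notin> \<alpha>" and "(y, z) \<notin> \<alpha>"
  shows "x = z"
proof -
  obtain \<beta> where "quasiorder_on A \<beta>" and cover: "\<alpha> \<union> \<beta> = A \<times> A"
    and meet: "\<alpha> \<inter> \<beta> = Id_on A"
    using assms(1) unfolding half_space_def by blast
  then have "trans \<beta>" by (simp add: quasiorder_on_def)
  have "\<alpha> \<subseteq> A \<times> A"
    using assms(1) by (simp add: half_space_def quasiorder_on_def)
  with assms(2) have "x \<in> A" "z \<in> A" by auto
  with assms(3-5) cover have "(x, y) \<in> \<beta>" "(y, z) \<in> \<beta>" by (auto simp: set_eq_iff)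
  with \<open>trans \<beta>\<close> have "(x, z) \<in> \<beta>" by (rule transD)
  with assms(2) have "(x, z) \<in> \<alpha> \<inter> \<beta>" by simp
  then show "x = z" by (simp add: meet Id_on_iff)
qed

lemma extend_by_iff:
  "(x, y) \<in> extend_by \<alpha> L \<longleftrightarrow>
     (x, y) \<in> \<alpha> \<or> (x, y) \<in> L \<and> (x, y) \<notin> \<alpha> \<and> (y, x) \<notin> \<alpha>"
  by (auto simp: extend_by_def)

lemma subset_extend_by: "\<alpha> \<subseteq> extend_by \<alpha> L"
  by (auto simp: extend_by_def)

lemma trans_extend_by:
  assumes "half_space A \<alpha>" and "trans L" and "L \<subseteq> A \<times> A"
  shows "trans (extend_by \<alpha> L)"
proof (rule transI)
  fix a b c
  assume ab: "(a, b) \<in> extend_by \<alpha> L" and bc: "(b, c) \<in> extend_by \<alpha> L"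
  have "trans \<alpha>" and "refl_on A \<alpha>" and "\<alpha> \<subseteq> A \<times> A"
    using assms(1) by (simp_all add: half_space_def quasiorder_on_def)
  with assms(3) ab bc have A: "a \<in> A" "b \<in> A" "c \<in> A"
    by (auto simp: extend_by_iff)
  note between = half_space_eq_if_non_edges[OF assms(1)]
  show "(a, c) \<in> extend_by \<alpha> L"
  proof (cases "(a, c) \<in> \<alpha>")
    case True
    then show ?thesis by (simp add: extend_by_iff)
  next
    case ac: False
    consider "(a, b) \<in> \<alpha>" "(b, c) \<in> \<alpha>"
      | "(a, b) \<in> \<alpha>" "(b, c) \<in> L" "(c, b) \<notin> \<alpha>"
      | "(b, c) \<in> \<alpha>" "(a, b) \<in> L" "(b, a) \<notin> \<alpha>"
      | "(a, b) \<in> L" "(b, a) \<notin> \<alpha>" "(b, c) \<in> L" "(c, b) \<notin> \<alpha>"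
      using ab bc by (auto simp: extend_by_iff)
    then show ?thesis
    proof cases
      case 1
      with \<open>trans \<alpha>\<close> have "(a, c) \<in> \<alpha>" by (rule transD)
      with ac show ?thesis by contradiction
    next
      case 2
      from 2(1) A(3) ac 2(3) have "a = b" by (rule between)
      with bc show ?thesis by simp
    next
      case 3
      from 3(1) A(1) 3(3) ac have "b = c" by (rule between)
      with ab show ?thesis by simp
    next
      case 4
      from \<open>trans L\<close> 4(1) 4(3) have "(a, c) \<in> L" by (rule transD)
      moreover have "(c, a) \<notin> \<alpha>"
      proof
        assume "(c, a) \<in> \<alpha>"
        from this A(2) 4(4) 4(2) have "c = a" by (rule between)
        with \<open>refl_on A \<alpha>\<close> A(1) ac show False by (simp add: refl_onD)
      qed
      ultimately show ?thesis using ac by (simp add: extend_by_iff)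
    qed
  qed
qed

lemma linear_order_on'_extend_by:
  assumes "partial_order_on' A \<alpha>" and "half_space A \<alpha>" and "linear_order_on' A L"
  shows "linear_order_on' A (extend_by \<alpha> L)"
proof -
  have \<alpha>: "\<alpha> \<subseteq> A \<times> A" "refl_on A \<alpha>" "antisym \<alpha>"
    using assms(1) by (simp_all add: partial_order_on'_def quasiorder_on_def)
  have L: "L \<subseteq> A \<times> A" "trans L" "antisym L" "total_on A L"
    using assms(3) by (simp_all add: linear_order_on'_def partial_order_on'_def quasiorder_on_def)
  have "extend_by \<alpha> L \<subseteq> A \<times> A"
    using \<alpha>(1) L(1) by (auto simp: extend_by_def)
  moreover have "refl_on A (extend_by \<alpha> L)"
    using \<alpha>(2) subset_extend_by by (auto simp: refl_on_def)
  moreover have "trans (extend_by \<alpha> L)"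
    using assms(2) L(2,1) by (rule trans_extend_by)
  moreover have "antisym (extend_by \<alpha> L)"
    using \<alpha>(3) L(3) by (auto simp: antisym_def extend_by_iff)
  moreover have "total_on A (extend_by \<alpha> L)"
    using L(4) by (auto simp: total_on_def extend_by_iff)
  ultimately show ?thesis
    by (simp add: linear_order_on'_def partial_order_on'_def quasiorder_on_def)
qed

lemma extend_by_inter_converse:
  assumes "refl_on A \<alpha>" and "L \<subseteq> A \<times> A" and "antisym L"
  shows "extend_by \<alpha> L \<inter> extend_by \<alpha> (L\<inverse>) = \<alpha>"
proof
  show "extend_by \<alpha> L \<inter> extend_by \<alpha> (L\<inverse>) \<subseteq> \<alpha>"
  proof (rule subrelI)
    fix x y
    assume xy: "(x, y) \<in> extend_by \<alpha> L \<inter> extend_by \<alpha> (L\<inverse>)"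
    show "(x, y) \<in> \<alpha>"
    proof (rule ccontr)
      assume "(x, y) \<notin> \<alpha>"
      with xy have "(x, y) \<in> L" "(y, x) \<in> L" by (auto simp: extend_by_iff)
      with assms(2,3) have "x = y" "x \<in> A" by (auto dest: antisymD)
      with assms(1) \<open>(x, y) \<notin> \<alpha>\<close> show False by (simp add: refl_onD)
    qed
  qed
qed (simp add: subset_extend_by)

theorem proposition2p5:
  fixes A :: "'a set" and \<alpha> L :: "'a rel"
  assumes "partial_order_on' A \<alpha>"
    and "half_space A \<alpha>"
    and "linear_order_on' A L"
  shows "linear_order_on' A (extend_by \<alpha> L) \<and> \<alpha> \<subseteq> extend_by \<alpha> L \<and>
         \<alpha> = extend_by \<alpha> L \<inter> extend_by \<alpha> (L\<inverse>)"
proof -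
  have "refl_on A \<alpha>"
    using assms(1) by (simp add: partial_order_on'_def quasiorder_on_def)
  moreover have "L \<subseteq> A \<times> A" "antisym L"
    using assms(3) by (simp_all add: linear_order_on'_def partial_order_on'_def quasiorder_on_def)
  ultimately have "extend_by \<alpha> L \<inter> extend_by \<alpha> (L\<inverse>) = \<alpha>"
    by (rule extend_by_inter_converse)
  with linear_order_on'_extend_by[OF assms] subset_extend_by show ?thesis
    by simp
qed

end
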